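(* Let $A_1,\ldots,A_n$ be events in a probability space, let $X$ be the number of these events that occur, and for $1\le j\le n$ let $S_j=\sum_{1\le i_1<\cdots<i_j\le n}P(A_{i_1}\cdots A_{i_j})$. Let $r,k$ be integers with $1\le r\le k<n$. For $1\le i\le r$ and indices $1\le r_1<\cdots<r_{k+1-i}\le n$, let $$T(r_1,\ldots,r_{k+1-i})=\{(t_1,\ldots,t_i): r_{k+1-i}<t_1<\cdots<t_i\le n\},$$ and let $$M_i=\sum_{1\le r_1<\cdots<r_{k+1-i}\le n}\ \max_{(t_1,\ldots,t_i)\in T(r_1,\ldots,r_{k+1-i})}P(A_{r_1}\cdots A_{r_{k+1-i}}A_{t_1}\cdots A_{t_i}).$$ If $r+k$ is odd, then $$P(X\ge r)\ge\sum_{j=r}^{k}(-1)^{r+j}\binom{j-1}{r-1}S_j+\sum_{i=1}^{r}\binom{k-i}{r-i}M_i,$$ and if $r+k$ is even, then $$P(X\ge r)\le\sum_{j=r}^{k}(-1)^{r+j}\binom{j-1}{r-1}S_j-\sum_{i=1}^{r}\binom{k-i}{r-i}M_i.$$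
   Context: Binomial convention: for integers $s,t$, $\binom{t}{s}=0$ if $\min(s,t)<0$ or $s>t$; otherwise $\binom{t}{s}=\frac{t!}{s!(t-s)!}$. $A_{i_1}\cdots A_{i_j}$ denotes the intersection of the events. A maximum over an empty set $T(\cdot)$ is taken to be $0$. *)

theory Defs
  imports "HOL-Probability.Probability"
begin

definition num_occ :: "(nat \<Rightarrow> 'a set) \<Rightarrow> nat \<Rightarrow> 'a \<Rightarrow> nat" where
  "num_occ A n w = card {i \<in> {1..n}. w \<in> A i}"

definition S_sum :: "'a measure \<Rightarrow> (nat \<Rightarrow> 'a set) \<Rightarrow> nat \<Rightarrow> nat \<Rightarrow> real" where
  "S_sum M A n j = (\<Sum>J\<in>{J. J \<subseteq> {1..n} \<and> card J = j}. measure M (\<Inter>i\<in>J. A i))"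

definition T_set :: "nat \<Rightarrow> nat set \<Rightarrow> nat \<Rightarrow> nat set set" where
  "T_set n R i = {U. U \<subseteq> {Max R<..n} \<and> card U = i}"

definition max0 :: "real set \<Rightarrow> real" where
  "max0 X = (if X = {} then 0 else Max X)"

definition M_sum :: "'a measure \<Rightarrow> (nat \<Rightarrow> 'a set) \<Rightarrow> nat \<Rightarrow> nat \<Rightarrow> nat \<Rightarrow> real" where
  "M_sum M A n k i = (\<Sum>R\<in>{R. R \<subseteq> {1..n} \<and> card R = k + 1 - i}.
      max0 ((\<lambda>U. measure M (\<Inter>j\<in>R \<union> U. A j)) ` T_set n R i))"

end

theory Submission
  imports Defs
begin

text \<open>Split the sample space into the atoms on which exactly the events indexed by
  \<open>I \<subseteq> {1..n}\<close> occur. \<open>P(X \<ge> r)\<close> and the \<open>S\<^sub>j\<close> are linear in the atom probabilities,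
  with coefficients \<open>[r \<le> |I|]\<close> and \<open>C(|I|, j)\<close>. Bounding each maximum in \<open>M\<^sub>i\<close> by the
  mass of the atoms that contain \<open>R\<close> and at least \<open>i\<close> indices above \<open>max R\<close> bounds \<open>M\<^sub>i\<close>
  by the combination with coefficients \<open>C(|I| - i, k + 1 - i)\<close>, the number of
  \<open>(k + 1 - i)\<close>-subsets of \<open>I\<close> avoiding its \<open>i\<close> largest elements. The theorem thus
  reduces to the identity, for all \<open>x\<close>,
  \<open>[r \<le> x] = (\<Sum>j=r..k. (-1)^(r+j) C(j-1, r-1) C(x, j)) + (-1)^(k-r+1) (\<Sum>i=1..r. C(k-i, r-i) C(x-i, k+1-i))\<close>,
  which follows by induction on \<open>x\<close> from a three-term Pascal recurrence satisfied by
  both sides.\<close>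

text \<open>Unlike \<open>(x - i) choose m\<close> with truncated subtraction, this vanishes for \<open>x < i\<close>
  also when \<open>m = 0\<close>, so that Pascal's rule holds without side conditions.\<close>
definition choose_diff :: "nat \<Rightarrow> nat \<Rightarrow> nat \<Rightarrow> real" where
  "choose_diff x i m = (if i \<le> x then real ((x - i) choose m) else 0)"

lemma choose_diff_Suc_Suc:
  "choose_diff (Suc x) i (Suc m) = choose_diff x i (Suc m) + choose_diff x i m"
proof (cases "i \<le> x")
  case True
  then have "Suc x - i = Suc (x - i)" by simp
  with True show ?thesis by (simp add: choose_diff_def)
next
  case False
  then show ?thesis by (cases "i = Suc x") (auto simp: choose_diff_def)
qed

lemma choose_diff_Suc: "choose_diff x i (Suc m) = real ((x - i) choose Suc m)"
  by (simp add: choose_diff_def)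

text \<open>The truncated sum and the remainder of the identity in terms of \<open>s = r - 1\<close> and
  \<open>d = k - r\<close>, in which the Pascal recurrences take a uniform shape.\<close>

definition alt_choose_sum :: "nat \<Rightarrow> nat \<Rightarrow> nat \<Rightarrow> real" where
  "alt_choose_sum s d x = (\<Sum>t\<le>d. (-1)^t * real ((s + t) choose s) * real (x choose (s + 1 + t)))"

definition alt_choose_error :: "nat \<Rightarrow> nat \<Rightarrow> nat \<Rightarrow> real" where
  "alt_choose_error s d x = (-1)^(d + 1) * (of_bool (s + 1 \<le> x) - alt_choose_sum s d x)"

definition alt_choose_remainder :: "nat \<Rightarrow> nat \<Rightarrow> nat \<Rightarrow> real" where
  "alt_choose_remainder s d x =
     (\<Sum>m\<le>s. real ((d + m) choose m) * choose_diff x (s + 1 - m) (d + 1 + m))"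

lemma alt_choose_sum_Suc_Suc_Suc:
  "alt_choose_sum (Suc s) (Suc d) (Suc x) =
     alt_choose_sum (Suc s) (Suc d) x + alt_choose_sum s (Suc d) x - alt_choose_sum (Suc s) d x"
proof -
  let ?f = "\<lambda>c t. (-1::real)^t * real ((s + t) choose c) * real (x choose (Suc s + t))"
  have "alt_choose_sum (Suc s) (Suc d) (Suc x) =
      alt_choose_sum (Suc s) (Suc d) x + (\<Sum>t\<le>Suc d. ?f s t + ?f (Suc s) t)"
    unfolding alt_choose_sum_def by (simp add: sum.distrib[symmetric] algebra_simps)
  moreover have "(\<Sum>t\<le>Suc d. ?f s t) = alt_choose_sum s (Suc d) x"
    unfolding alt_choose_sum_def by (simp add: algebra_simps)
  moreover have "(\<Sum>t\<le>Suc d. ?f (Suc s) t) = - alt_choose_sum (Suc s) d x"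
    unfolding alt_choose_sum_def sum.atMost_Suc_shift by (simp add: sum_negf[symmetric])
  ultimately show ?thesis by (simp add: sum.distrib)
qed

lemma alt_choose_error_Suc_Suc_Suc:
  "alt_choose_error (Suc s) (Suc d) (Suc x) =
     alt_choose_error (Suc s) (Suc d) x + alt_choose_error (Suc s) d x + alt_choose_error s (Suc d) x"
  unfolding alt_choose_error_def alt_choose_sum_Suc_Suc_Suc by (simp add: algebra_simps)

lemma alt_choose_remainder_Suc_Suc_Suc:
  "alt_choose_remainder (Suc s) (Suc d) (Suc x) =
     alt_choose_remainder (Suc s) (Suc d) x + alt_choose_remainder (Suc s) d x
     + alt_choose_remainder s (Suc d) x"
proof -
  let ?R = alt_choose_remainder
  have pascal: "choose_diff (Suc x) (Suc s + 1 - m) (Suc d + 1 + m) =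
      choose_diff x (Suc s + 1 - m) (Suc d + 1 + m) + choose_diff x (Suc s + 1 - m) (Suc d + m)" for m
    using choose_diff_Suc_Suc[of x "Suc s + 1 - m" "Suc d + m"] by simp
  have "?R (Suc s) (Suc d) (Suc x) = ?R (Suc s) (Suc d) x +
      (\<Sum>m\<le>Suc s. real ((Suc d + m) choose m) * choose_diff x (Suc s + 1 - m) (Suc d + m))"
    unfolding alt_choose_remainder_def pascal by (simp add: sum.distrib[symmetric] algebra_simps)
  also have "(\<Sum>m\<le>Suc s. real ((Suc d + m) choose m) * choose_diff x (Suc s + 1 - m) (Suc d + m)) =
      ?R (Suc s) d x + (\<Sum>m\<le>Suc s. (real ((Suc d + m) choose m) - real ((d + m) choose m))
        * choose_diff x (Suc s + 1 - m) (Suc d + m))"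
    unfolding alt_choose_remainder_def by (simp add: sum.distrib[symmetric] algebra_simps)
  also have "(\<Sum>m\<le>Suc s. (real ((Suc d + m) choose m) - real ((d + m) choose m))
        * choose_diff x (Suc s + 1 - m) (Suc d + m)) = ?R s (Suc d) x"
    unfolding alt_choose_remainder_def sum.atMost_Suc_shift by simp
  finally show ?thesis by simp
qed

lemma alt_choose_error_eq_remainder_s0: "alt_choose_error 0 d x = alt_choose_remainder 0 d x"
proof (induction d)
  case 0
  then show ?case
    by (cases x) (auto simp: alt_choose_error_def alt_choose_sum_def alt_choose_remainder_def choose_diff_def)
next
  case (Suc d)
  have "alt_choose_error 0 (Suc d) x = - alt_choose_error 0 d x + real (x choose (d + 2))"
    unfolding alt_choose_error_def alt_choose_sum_def by (simp add: algebra_simps)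
  moreover have "alt_choose_remainder 0 (Suc d) x = - alt_choose_remainder 0 d x + real (x choose (d + 2))"
    by (cases x) (simp_all add: alt_choose_remainder_def choose_diff_def)
  ultimately show ?case using Suc by simp
qed

lemma choose_Suc_minus_of_bool_eq_sum_choose_diff:
  "real (x choose (s + 1)) - of_bool (s + 1 \<le> x) = (\<Sum>m\<le>s. choose_diff x (s + 1 - m) (m + 1))"
proof (induction x arbitrary: s)
  case 0
  then show ?case by (simp add: choose_diff_def)
next
  case (Suc x)
  have "(\<Sum>m\<le>s. choose_diff (Suc x) (s + 1 - m) (m + 1)) =
      (\<Sum>m\<le>s. choose_diff x (s + 1 - m) (m + 1)) + (\<Sum>m\<le>s. choose_diff x (s + 1 - m) m)"
    by (simp add: choose_diff_Suc_Suc sum.distrib)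
  moreover have "(\<Sum>m\<le>s. choose_diff x (s + 1 - m) m) =
      real (x choose s) - of_bool (s \<le> x) + of_bool (s + 1 \<le> x)"
  proof (cases s)
    case 0
    then show ?thesis by (simp add: choose_diff_def)
  next
    case (Suc s')
    have "(\<Sum>m\<le>s. choose_diff x (s + 1 - m) m) =
        choose_diff x (s' + 2) 0 + (\<Sum>m\<le>s'. choose_diff x (s' + 1 - m) (m + 1))"
      unfolding Suc sum.atMost_Suc_shift by simp
    then show ?thesis using Suc.IH[of s'] Suc by (simp add: choose_diff_def)
  qed
  ultimately show ?case using Suc.IH[of s] by auto
qed

lemma alt_choose_error_eq_remainder_d0: "alt_choose_error s 0 x = alt_choose_remainder s 0 x"
  using choose_Suc_minus_of_bool_eq_sum_choose_diff[of x s]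
  by (simp add: alt_choose_error_def alt_choose_sum_def alt_choose_remainder_def add.commute)

lemma alt_choose_error_eq_remainder: "alt_choose_error s d x = alt_choose_remainder s d x"
proof (induction x arbitrary: s d)
  case 0
  then show ?case
    by (simp add: alt_choose_error_def alt_choose_sum_def alt_choose_remainder_def choose_diff_def)
next
  case (Suc x)
  show ?case
  proof (cases s)
    case 0
    then show ?thesis by (simp add: alt_choose_error_eq_remainder_s0)
  next
    case (Suc s')
    show ?thesis
    proof (cases d)
      case 0
      then show ?thesis by (simp add: alt_choose_error_eq_remainder_d0)
    next
      case (Suc d')
      then show ?thesis
        using \<open>s = Suc s'\<close> Suc.IH alt_choose_error_Suc_Suc_Suc alt_choose_remainder_Suc_Suc_Suc
        by metis
    qed
  qed
qed

lemma alt_choose_sum_reindex: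
  "(\<Sum>j = Suc s..Suc s + d. (-1)^(Suc s + j) * real ((j - 1) choose s) * real (x choose j)) =
     alt_choose_sum s d x"
proof -
  have "(\<Sum>j = Suc s..Suc s + d. (-1)^(Suc s + j) * real ((j - 1) choose s) * real (x choose j)) =
      (\<Sum>t = 0..d. (-1)^(Suc s + (t + Suc s)) * real ((t + Suc s - 1) choose s) * real (x choose (t + Suc s)))"
    using sum.shift_bounds_cl_nat_ivl[of
        "\<lambda>j. (-1::real)^(Suc s + j) * real ((j - 1) choose s) * real (x choose j)" 0 "Suc s" d]
    by (simp add: add.commute)
  also have "\<dots> = alt_choose_sum s d x"
    unfolding alt_choose_sum_def atLeast0AtMost
  proof (rule sum.cong[OF refl])
    fix t
    have "(-1::real)^(Suc s + (t + Suc s)) = (-1)^t"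
      by (simp add: power_add power_mult flip: mult_2)
    then show "(-1)^(Suc s + (t + Suc s)) * real ((t + Suc s - 1) choose s) * real (x choose (t + Suc s)) =
        (-1)^t * real ((s + t) choose s) * real (x choose (s + 1 + t))"
      by (simp add: add.commute)
  qed
  finally show ?thesis .
qed

definition bonferroni_remainder :: "nat \<Rightarrow> nat \<Rightarrow> nat \<Rightarrow> real" where
  "bonferroni_remainder r k x = (\<Sum>i = 1..r. real ((k - i) choose (r - i)) * real ((x - i) choose (k + 1 - i)))"

lemma bonferroni_remainder_eq_alt_choose_remainder:
  "bonferroni_remainder (Suc s) (Suc s + d) x = alt_choose_remainder s d x"
proof -
  have "bonferroni_remainder (Suc s) (Suc s + d) x =
      (\<Sum>m\<le>s. real ((Suc s + d - (Suc s - m)) choose (Suc s - (Suc s - m)))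
        * real ((x - (Suc s - m)) choose (Suc s + d + 1 - (Suc s - m))))"
    unfolding bonferroni_remainder_def
    by (rule sum.reindex_bij_witness[where i="\<lambda>m. Suc s - m" and j="\<lambda>i. Suc s - i"]) auto
  also have "\<dots> = alt_choose_remainder s d x"
    unfolding alt_choose_remainder_def
  proof (rule sum.cong[OF refl])
    fix m assume "m \<in> {..s}"
    then have "Suc s + d - (Suc s - m) = d + m" "Suc s - (Suc s - m) = m"
      "Suc s + d + 1 - (Suc s - m) = Suc (d + m)" "s + 1 - m = Suc s - m" "d + 1 + m = Suc (d + m)"
      by auto
    then show "real ((Suc s + d - (Suc s - m)) choose (Suc s - (Suc s - m)))
        * real ((x - (Suc s - m)) choose (Suc s + d + 1 - (Suc s - m))) =
        real ((d + m) choose m) * choose_diff x (s + 1 - m) (d + 1 + m)"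
      by (simp only: choose_diff_Suc)
  qed
  finally show ?thesis .
qed

lemma of_bool_le_eq_bonferroni:
  assumes "1 \<le> r" "r \<le> k"
  shows "of_bool (r \<le> x) =
    (\<Sum>j = r..k. (-1)^(r + j) * real ((j - 1) choose (r - 1)) * real (x choose j))
    + (-1)^(k - r + 1) * bonferroni_remainder r k x"
proof -
  obtain s d where r: "r = Suc s" and k: "k = Suc s + d"
    using assms by (metis le_add_diff_inverse not_one_le_zero not0_implies_Suc)
  have "(-1::real)^(d + 1) * (-1)^(d + 1) = 1"
    by (simp flip: power_add add: power_mult flip: mult_2)
  then have "of_bool (Suc s \<le> x) - alt_choose_sum s d x = (-1)^(d + 1) * alt_choose_error s d x"
    unfolding alt_choose_error_def by (simp flip: mult.assoc)
  moreover have "k - r + 1 = d + 1"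
    using r k by simp
  ultimately show ?thesis
    unfolding r k alt_choose_error_eq_remainder diff_Suc_1 alt_choose_sum_reindex
      bonferroni_remainder_eq_alt_choose_remainder
    by simp
qed

lemma card_elements_with_many_greater:
  fixes I :: "'a::linorder set"
  assumes "finite I"
  shows "card {a \<in> I. i \<le> card {b \<in> I. a < b}} = card I - i"
  using assms
proof (induction I arbitrary: i rule: finite_linorder_max_induct)
  case empty
  then show ?case by simp
next
  case (insert c I)
  have greater: "card {b \<in> insert c I. a < b} = Suc (card {b \<in> I. a < b})" if "a \<in> I" for a
  proof -
    have "{b \<in> insert c I. a < b} = insert c {b \<in> I. a < b}"
      using insert.hyps that by auto
    then show ?thesis using insert.hyps by auto
  qed
  have "{b \<in> insert c I. c < b} = {}"
    using insert.hyps by auto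
  then have none_greater: "card {b \<in> insert c I. c < b} = 0"
    by (metis card.empty)
  show ?case
  proof (cases i)
    case 0
    then have "{a \<in> insert c I. i \<le> card {b \<in> insert c I. a < b}} = insert c I"
      by blast
    then show ?thesis using 0 by (simp only: diff_zero)
  next
    case (Suc j)
    then have "{a \<in> insert c I. i \<le> card {b \<in> insert c I. a < b}} = {a \<in> I. j \<le> card {b \<in> I. a < b}}"
      using greater none_greater by auto
    then show ?thesis using insert Suc by auto
  qed
qed

text \<open>\<open>R\<close> qualifies iff all its elements have at least \<open>i\<close> elements of \<open>I\<close> above them.\<close>

lemma card_subsets_with_many_greater_Max:
  fixes I :: "'a::linorder set"
  assumes "finite I" "1 \<le> m"
  shows "card {R. R \<subseteq> I \<and> card R = m \<and> i \<le> card {b \<in> I. Max R < b}} = (card I - i) choose m"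
proof -
  let ?I' = "{a \<in> I. i \<le> card {b \<in> I. a < b}}"
  have "{R. R \<subseteq> I \<and> card R = m \<and> i \<le> card {b \<in> I. Max R < b}} = {R. R \<subseteq> ?I' \<and> card R = m}"
  proof (intro Collect_cong iffI)
    fix R assume R: "R \<subseteq> I \<and> card R = m \<and> i \<le> card {b \<in> I. Max R < b}"
    have "finite R" using R assms(1) finite_subset by blast
    have "R \<subseteq> ?I'"
    proof
      fix a assume "a \<in> R"
      then have "{b \<in> I. Max R < b} \<subseteq> {b \<in> I. a < b}"
        using \<open>finite R\<close> by (auto dest: Max_ge)
      then have "card {b \<in> I. Max R < b} \<le> card {b \<in> I. a < b}"
        using assms(1) by (intro card_mono) auto
      then show "a \<in> ?I'" using R \<open>a \<in> R\<close> by auto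
    qed
    then show "R \<subseteq> ?I' \<and> card R = m" using R by simp
  next
    fix R assume R: "R \<subseteq> ?I' \<and> card R = m"
    then have "R \<noteq> {}" using assms(2) by auto
    moreover have "finite R" using R assms(1) finite_subset by fastforce
    ultimately have "Max R \<in> R" by simp
    then show "R \<subseteq> I \<and> card R = m \<and> i \<le> card {b \<in> I. Max R < b}" using R by auto
  qed
  then show ?thesis
    using n_subsets[of ?I' m] card_elements_with_many_greater[OF assms(1), of i] assms(1) by simp
qed

lemma max0_le:
  assumes "finite X" "\<And>x. x \<in> X \<Longrightarrow> x \<le> b" "0 \<le> b"
  shows "max0 X \<le> b"
  using assms by (simp add: max0_def)

locale event_family = prob_space M for M :: "'a measure" +
  fixes A :: "nat \<Rightarrow> 'a set" and n :: nat
  assumes events_A: "\<And>i. i \<in> {1..n} \<Longrightarrow> A i \<in> events"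
begin

definition occurring :: "'a \<Rightarrow> nat set" where
  "occurring w = {i \<in> {1..n}. w \<in> A i}"

definition atom_prob :: "nat set \<Rightarrow> real" where
  "atom_prob I = prob {w \<in> space M. occurring w = I}"

lemma atom_event: "{w \<in> space M. occurring w = I} \<in> events"
proof -
  have "{w \<in> space M. occurring w = I} =
      {w \<in> space M. (\<forall>i \<in> {1..n}. w \<in> A i \<longleftrightarrow> i \<in> I) \<and> I \<subseteq> {1..n}}"
    unfolding occurring_def by auto
  also have "\<dots> \<in> events"
  proof (intro sets.sets_Collect_conj sets.sets_Collect_finite_All sets.sets_Collect_const)
    fix i assume i: "i \<in> {1..n}"
    have "{w \<in> space M. w \<in> A i \<longleftrightarrow> i \<in> I} = (if i \<in> I then A i else space M - A i)"
      using sets.sets_into_space[OF events_A[OF i]] by auto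
    then show "{w \<in> space M. w \<in> A i \<longleftrightarrow> i \<in> I} \<in> events"
      using events_A[OF i] by auto
  qed simp
  finally show ?thesis .
qed

lemma prob_occurring:
  "prob {w \<in> space M. Q (occurring w)} = (\<Sum>I \<in> Pow {1..n}. of_bool (Q I) * atom_prob I)"
proof -
  have "{w \<in> space M. Q (occurring w)} = (\<Union>I \<in> {I \<in> Pow {1..n}. Q I}. {w \<in> space M. occurring w = I})"
    unfolding occurring_def by auto
  also have "prob \<dots> = (\<Sum>I \<in> {I \<in> Pow {1..n}. Q I}. atom_prob I)"
    unfolding atom_prob_def
    by (intro finite_measure_finite_Union) (auto simp: atom_event disjoint_family_on_def)
  also have "\<dots> = (\<Sum>I \<in> Pow {1..n}. of_bool (Q I) * atom_prob I)"
    by (simp add: Int_def conj_commute)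
  finally show ?thesis .
qed

lemma prob_Inter_eq:
  assumes "J \<subseteq> {1..n}" "J \<noteq> {}"
  shows "prob (\<Inter>i \<in> J. A i) = (\<Sum>I \<in> Pow {1..n}. of_bool (J \<subseteq> I) * atom_prob I)"
proof -
  have "(\<Inter>i \<in> J. A i) = {w \<in> space M. J \<subseteq> occurring w}"
    using assms sets.sets_into_space[OF events_A] unfolding occurring_def by blast
  then show ?thesis by (simp add: prob_occurring)
qed

lemma prob_num_occ_ge:
  "prob {w \<in> space M. r \<le> num_occ A n w} = (\<Sum>I \<in> Pow {1..n}. of_bool (r \<le> card I) * atom_prob I)"
  using prob_occurring[of "\<lambda>I. r \<le> card I"] by (simp add: num_occ_def occurring_def)

lemma S_sum_eq:
  assumes "1 \<le> j"
  shows "S_sum M A n j = (\<Sum>I \<in> Pow {1..n}. real (card I choose j) * atom_prob I)"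
proof -
  let ?Js = "{J. J \<subseteq> {1..n} \<and> card J = j}"
  have "S_sum M A n j = (\<Sum>J \<in> ?Js. \<Sum>I \<in> Pow {1..n}. of_bool (J \<subseteq> I) * atom_prob I)"
    unfolding S_sum_def using assms by (intro sum.cong refl prob_Inter_eq) auto
  also have "\<dots> = (\<Sum>I \<in> Pow {1..n}. (\<Sum>J \<in> ?Js. of_bool (J \<subseteq> I)) * atom_prob I)"
    unfolding sum_distrib_right by (rule sum.swap)
  also have "\<dots> = (\<Sum>I \<in> Pow {1..n}. real (card I choose j) * atom_prob I)"
  proof (intro sum.cong refl arg_cong2[where f = "(*)"])
    fix I assume "I \<in> Pow {1..n}"
    then have "?Js \<inter> {J. J \<subseteq> I} = {J. J \<subseteq> I \<and> card J = j}" and "finite I"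
      using finite_subset by auto
    then show "(\<Sum>J \<in> ?Js. of_bool (J \<subseteq> I)) = real (card I choose j)"
      by (simp add: n_subsets)
  qed
  finally show ?thesis .
qed

lemma prob_Inter_le_atoms_above_Max:
  assumes "R \<subseteq> {1..n}" "R \<noteq> {}" "U \<in> T_set n R i"
  shows "prob (\<Inter>j \<in> R \<union> U. A j) \<le>
    (\<Sum>I \<in> Pow {1..n}. of_bool (R \<subseteq> I \<and> i \<le> card {b \<in> I. Max R < b}) * atom_prob I)"
proof -
  have U: "U \<subseteq> {Max R<..n}" "card U = i"
    using assms(3) by (auto simp: T_set_def)
  have "prob (\<Inter>j \<in> R \<union> U. A j) = (\<Sum>I \<in> Pow {1..n}. of_bool (R \<union> U \<subseteq> I) * atom_prob I)"
    using assms(1,2) U by (intro prob_Inter_eq) auto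
  also have "\<dots> \<le> (\<Sum>I \<in> Pow {1..n}. of_bool (R \<subseteq> I \<and> i \<le> card {b \<in> I. Max R < b}) * atom_prob I)"
  proof (intro sum_mono mult_right_mono)
    fix I assume I: "I \<in> Pow {1..n}"
    show "of_bool (R \<union> U \<subseteq> I) \<le> (of_bool (R \<subseteq> I \<and> i \<le> card {b \<in> I. Max R < b}) :: real)"
    proof (cases "R \<union> U \<subseteq> I")
      case True
      then have "U \<subseteq> {b \<in> I. Max R < b}"
        using U by auto
      then have "i \<le> card {b \<in> I. Max R < b}"
        using I U card_mono[of "{b \<in> I. Max R < b}" U] finite_subset[of I "{1..n}"] by auto
      with True show ?thesis by simp
    qed auto
  qed (simp add: atom_prob_def)
  finally show ?thesis .
qed

lemma M_sum_le:
  assumes "1 \<le> i" "i \<le> k"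
  shows "M_sum M A n k i \<le> (\<Sum>I \<in> Pow {1..n}. real ((card I - i) choose (k + 1 - i)) * atom_prob I)"
proof -
  let ?Rs = "{R. R \<subseteq> {1..n} \<and> card R = k + 1 - i}"
  let ?above = "\<lambda>I R. R \<subseteq> I \<and> i \<le> card {b \<in> I. Max R < b}"
  have finite_Rs: "finite ?Rs"
    by (rule finite_subset[of _ "Pow {1..n}"]) auto
  have "M_sum M A n k i \<le> (\<Sum>R \<in> ?Rs. \<Sum>I \<in> Pow {1..n}. of_bool (?above I R) * atom_prob I)"
    unfolding M_sum_def
  proof (intro sum_mono max0_le)
    fix R assume R: "R \<in> ?Rs"
    then have "R \<noteq> {}"
      using assms by auto
    show "finite ((\<lambda>U. prob (\<Inter>j \<in> R \<union> U. A j)) ` T_set n R i)"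
      unfolding T_set_def by (rule finite_imageI, rule finite_subset[of _ "Pow {Max R<..n}"]) auto
    show "x \<le> (\<Sum>I \<in> Pow {1..n}. of_bool (?above I R) * atom_prob I)"
      if "x \<in> (\<lambda>U. prob (\<Inter>j \<in> R \<union> U. A j)) ` T_set n R i" for x
    proof -
      from that obtain U where "U \<in> T_set n R i" "x = prob (\<Inter>j \<in> R \<union> U. A j)"
        by blast
      with R \<open>R \<noteq> {}\<close> show ?thesis
        using prob_Inter_le_atoms_above_Max[of R U] by simp
    qed
    show "0 \<le> (\<Sum>I \<in> Pow {1..n}. of_bool (?above I R) * atom_prob I)"
      by (intro sum_nonneg) (simp add: atom_prob_def)
  qed
  also have "\<dots> = (\<Sum>I \<in> Pow {1..n}. (\<Sum>R \<in> ?Rs. of_bool (?above I R)) * atom_prob I)"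
    unfolding sum_distrib_right by (rule sum.swap)
  also have "\<dots> = (\<Sum>I \<in> Pow {1..n}. real ((card I - i) choose (k + 1 - i)) * atom_prob I)"
  proof (intro sum.cong refl arg_cong2[where f = "(*)"])
    fix I assume I: "I \<in> Pow {1..n}"
    then have "finite I"
      using finite_subset[of I "{1..n}"] by auto
    have "?Rs \<inter> {R. ?above I R} = {R. R \<subseteq> I \<and> card R = k + 1 - i \<and> i \<le> card {b \<in> I. Max R < b}}"
      using I by auto
    then show "(\<Sum>R \<in> ?Rs. of_bool (?above I R)) = real ((card I - i) choose (k + 1 - i))"
      using assms \<open>finite I\<close> finite_Rs by (simp add: card_subsets_with_many_greater_Max)
  qed
  finally show ?thesis .
qed

lemma S_sum_combination_eq:
  assumes "1 \<le> r"
  shows "(\<Sum>j = r..k. c j * S_sum M A n j) =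
    (\<Sum>I \<in> Pow {1..n}. (\<Sum>j = r..k. c j * real (card I choose j)) * atom_prob I)"
proof -
  have "(\<Sum>j = r..k. c j * S_sum M A n j) =
      (\<Sum>j = r..k. \<Sum>I \<in> Pow {1..n}. c j * real (card I choose j) * atom_prob I)"
    using assms by (intro sum.cong refl) (simp add: S_sum_eq sum_distrib_left mult.assoc)
  also have "\<dots> = (\<Sum>I \<in> Pow {1..n}. (\<Sum>j = r..k. c j * real (card I choose j)) * atom_prob I)"
    unfolding sum_distrib_right by (rule sum.swap)
  finally show ?thesis .
qed

lemma prob_num_occ_ge_eq_bonferroni:
  assumes "1 \<le> r" "r \<le> k"
  shows "prob {w \<in> space M. r \<le> num_occ A n w} =
    (\<Sum>j = r..k. (-1)^(r + j) * real ((j - 1) choose (r - 1)) * S_sum M A n j)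
    + (-1)^(k - r + 1) * (\<Sum>I \<in> Pow {1..n}. bonferroni_remainder r k (card I) * atom_prob I)"
  unfolding prob_num_occ_ge of_bool_le_eq_bonferroni[OF assms] S_sum_combination_eq[OF assms(1)]
  by (simp only: distrib_right sum.distrib sum_distrib_left mult.assoc)

lemma M_sum_combination_le:
  assumes "r \<le> k"
  shows "(\<Sum>i = 1..r. real ((k - i) choose (r - i)) * M_sum M A n k i) \<le>
    (\<Sum>I \<in> Pow {1..n}. bonferroni_remainder r k (card I) * atom_prob I)"
proof -
  have "(\<Sum>i = 1..r. real ((k - i) choose (r - i)) * M_sum M A n k i) \<le>
    (\<Sum>i = 1..r. real ((k - i) choose (r - i)) *
      (\<Sum>I \<in> Pow {1..n}. real ((card I - i) choose (k + 1 - i)) * atom_prob I))"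
    using assms by (intro sum_mono mult_left_mono M_sum_le) auto
  also have "\<dots> = (\<Sum>I \<in> Pow {1..n}. bonferroni_remainder r k (card I) * atom_prob I)"
    unfolding bonferroni_remainder_def sum_distrib_right sum_distrib_left
    by (subst sum.swap) (simp add: mult.assoc)
  finally show ?thesis .
qed

end

theorem theorem4:
  fixes M :: "'a measure" and A :: "nat \<Rightarrow> 'a set" and n r k :: nat
  assumes "prob_space M"
    and "\<And>i. i \<in> {1..n} \<Longrightarrow> A i \<in> sets M"
    and "1 \<le> r" and "r \<le> k" and "k < n"
  shows "(odd (r + k) \<longrightarrow>
           measure M {w \<in> space M. num_occ A n w \<ge> r} \<ge>
             (\<Sum>j=r..k. (-1) ^ (r + j) * real ((j - 1) choose (r - 1)) * S_sum M A n j)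
             + (\<Sum>i=1..r. real ((k - i) choose (r - i)) * M_sum M A n k i))
       \<and> (even (r + k) \<longrightarrow>
           measure M {w \<in> space M. num_occ A n w \<ge> r} \<le>
             (\<Sum>j=r..k. (-1) ^ (r + j) * real ((j - 1) choose (r - 1)) * S_sum M A n j)
             - (\<Sum>i=1..r. real ((k - i) choose (r - i)) * M_sum M A n k i))"
proof -
  interpret event_family M A n
    using assms(1,2) by (simp add: event_family_def event_family_axioms_def)
  have "even (k - r + 1) \<longleftrightarrow> odd (r + k)"
    using assms(4) by presburger
  then have sign: "(-1::real)^(k - r + 1) = (if odd (r + k) then 1 else -1)"
    by (simp only: minus_one_power_iff)
  show ?thesis
    using prob_num_occ_ge_eq_bonferroni[OF assms(3,4)] M_sum_combination_le[OF assms(4)] sign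
    by auto
qed

end
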